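(* Let $n\ge1$ and let $\sigma:V_n\setminus\{(0,0,n+1)\}\to V_n\setminus\{(0,0,n+1)\}$ be the involution $\sigma(i,j,k)=(i,1+i-j,n+1+i-k)$. Then $$\mathcal T_n=\{(\sigma(u),\sigma(v),\sigma(\alpha),\sigma(\beta)) : (\alpha,\beta,u,v)\in\mathcal T_n\},$$ where tiles are written as (right, top, left, bottom); that is, $\mathcal T_n$ is equal to the set of its tiles rotated by a half turn with $\sigma$ applied to all edge labels.
   Context: $V_n=\{(v_0,v_1,v_2)\in\mathbb{Z}^3: 0\le v_0\le v_1\le 1,\ v_1\le v_2\le n+1\}$, elements written as words $v_0v_1v_2$. A Wang tile is $t=(a,b,c,d)$ with $\mathrm{RIGHT}(t)=a$, $\mathrm{TOP}(t)=b$, $\mathrm{LEFT}(t)=c$, $\mathrm{BOTTOM}(t)=d$; $\hat t=(b,a,d,c)$, $\hat S=\{\hat t:t\in S\}$. Define (as (right, top, left, bottom)): $W_n=\{(11(i+1),11(j+1),11i,11j):1\le i,j\le n\}$; $B_n=\{(00(i+1),111,00i,11n):0\le i\le n-1\}$; $G_n=\{(01(i+1),111,00i,11(n+1)):0\le i\le n\}$; $Y_n=\{(01(i+1),112,01i,11(n+1)):1\le i\le n\}$; $j_n^{k,l,r,s}=((0,k,l),(0,r,s),(0,s,r+n),(0,l,k+n))$ for $(k,l),(r,s)\in\{(0,0),(0,1),(1,1)\}$; $J_n$ = these 9 tiles minus $j_n^{0,0,1,1},j_n^{1,1,0,0}$. $\mathcal{T}_n=W_n\cup B_n\cup G_n\cup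 Y_n\cup\hat B_n\cup\hat G_n\cup\hat Y_n\cup J_n$. *)

theory Defs
  imports Main
begin

type_synonym label = "int \<times> int \<times> int"
(* tile = (RIGHT, TOP, LEFT, BOTTOM) *)
type_synonym tile = "label \<times> label \<times> label \<times> label"

definition V :: "nat \<Rightarrow> label set" where
  "V n = {(v0, v1, v2). 0 \<le> v0 \<and> v0 \<le> v1 \<and> v1 \<le> 1 \<and> v1 \<le> v2 \<and> v2 \<le> int n + 1}"

definition hat :: "tile \<Rightarrow> tile" where
  "hat t = (case t of (a, b, c, d) \<Rightarrow> (b, a, d, c))"

definition W :: "nat \<Rightarrow> tile set" where
  "W n = {((1,1,i+1), (1,1,j+1), (1,1,i), (1,1,j)) | i j. 1 \<le> i \<and> i \<le> int n \<and> 1 \<le> j \<and> j \<le> int n}"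

definition B :: "nat \<Rightarrow> tile set" where
  "B n = {((0,0,i+1), (1,1,1), (0,0,i), (1,1,int n)) | i. 0 \<le> i \<and> i \<le> int n - 1}"

definition G :: "nat \<Rightarrow> tile set" where
  "G n = {((0,1,i+1), (1,1,1), (0,0,i), (1,1,int n + 1)) | i. 0 \<le> i \<and> i \<le> int n}"

definition Y :: "nat \<Rightarrow> tile set" where
  "Y n = {((0,1,i+1), (1,1,2), (0,1,i), (1,1,int n + 1)) | i. 1 \<le> i \<and> i \<le> int n}"

definition jtile :: "nat \<Rightarrow> int \<Rightarrow> int \<Rightarrow> int \<Rightarrow> int \<Rightarrow> tile" where
  "jtile n k l r s = ((0,k,l), (0,r,s), (0,s,r + int n), (0,l,k + int n))"

definition J :: "nat \<Rightarrow> tile set" where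
  "J n = {jtile n k l r s | k l r s.
            (k, l) \<in> {(0,0),(0,1),(1,1)} \<and> (r, s) \<in> {(0,0),(0,1),(1,1)}}
         - {jtile n 0 0 1 1, jtile n 1 1 0 0}"

definition T :: "nat \<Rightarrow> tile set" where
  "T n = W n \<union> B n \<union> G n \<union> Y n \<union> hat ` B n \<union> hat ` G n \<union> hat ` Y n \<union> J n"

definition sigma :: "nat \<Rightarrow> label \<Rightarrow> label" where
  "sigma n v = (case v of (i, j, k) \<Rightarrow> (i, 1 + i - j, int n + 1 + i - k))"

definition rot_sigma :: "nat \<Rightarrow> tile \<Rightarrow> tile" where
  "rot_sigma n t = (case t of (\<alpha>, \<beta>, u, v) \<Rightarrow> (sigma n u, sigma n v, sigma n \<alpha>, sigma n \<beta>))"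

end

theory Submission
  imports Defs
begin

text \<open>The half turn composed with \<open>sigma\<close> is an involution that commutes with \<open>hat\<close>,
  maps each of the families \<open>W\<close>, \<open>G\<close>, \<open>J\<close> into itself and exchanges \<open>B\<close> and \<open>Y\<close>:
  on the third coordinate it acts as \<open>i \<mapsto> n + 1 - i\<close>, which reverses the index ranges,
  and on \<open>J\<close> it acts as \<open>(k, l, r, s) \<mapsto> (1 - s, 1 - r, 1 - l, 1 - k)\<close>, which preserves
  the admissible pairs and fixes both excluded tiles. An involution mapping a set into
  itself maps it onto itself.\<close>

lemma involution_image_eq:
  assumes "\<And>x. f (f x) = x" and "f ` A \<subseteq> A"
  shows "f ` A = A"
proof
  show "A \<subseteq> f ` A"
  proof
    fix x assume "x \<in> A"
    then have "f x \<in> A" using assms(2) by blast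
    then show "x \<in> f ` A" using assms(1)[of x] by (metis image_eqI)
  qed
qed (fact assms(2))

lemma rot_sigma_rot_sigma: "rot_sigma n (rot_sigma n t) = t"
  by (cases t) (auto simp: rot_sigma_def sigma_def)

lemma rot_sigma_hat: "rot_sigma n (hat t) = hat (rot_sigma n t)"
  by (cases t) (auto simp: rot_sigma_def hat_def)

lemma rot_sigma_W: "t \<in> W n \<Longrightarrow> rot_sigma n t \<in> W n"
proof -
  assume "t \<in> W n"
  then obtain i j where t: "t = ((1,1,i+1), (1,1,j+1), (1,1,i), (1,1,j))"
    and "1 \<le> i" "i \<le> int n" "1 \<le> j" "j \<le> int n" unfolding W_def by blast
  then show ?thesis unfolding W_def rot_sigma_def sigma_def
    by (intro CollectI exI[of _ "int n + 1 - i"] exI[of _ "int n + 1 - j"]) auto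
qed

lemma rot_sigma_B: "t \<in> B n \<Longrightarrow> rot_sigma n t \<in> Y n"
proof -
  assume "t \<in> B n"
  then obtain i where t: "t = ((0,0,i+1), (1,1,1), (0,0,i), (1,1,int n))"
    and "0 \<le> i" "i \<le> int n - 1" unfolding B_def by blast
  then show ?thesis unfolding Y_def rot_sigma_def sigma_def
    by (intro CollectI exI[of _ "int n - i"]) auto
qed

lemma rot_sigma_Y: "t \<in> Y n \<Longrightarrow> rot_sigma n t \<in> B n"
proof -
  assume "t \<in> Y n"
  then obtain i where t: "t = ((0,1,i+1), (1,1,2), (0,1,i), (1,1,int n + 1))"
    and "1 \<le> i" "i \<le> int n" unfolding Y_def by blast
  then show ?thesis unfolding B_def rot_sigma_def sigma_def
    by (intro CollectI exI[of _ "int n - i"]) auto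
qed

lemma rot_sigma_G: "t \<in> G n \<Longrightarrow> rot_sigma n t \<in> G n"
proof -
  assume "t \<in> G n"
  then obtain i where t: "t = ((0,1,i+1), (1,1,1), (0,0,i), (1,1,int n + 1))"
    and "0 \<le> i" "i \<le> int n" unfolding G_def by blast
  then show ?thesis unfolding G_def rot_sigma_def sigma_def
    by (intro CollectI exI[of _ "int n - i"]) auto
qed

lemma jtile_eq_iff: "jtile n k l r s = jtile n k' l' r' s' \<longleftrightarrow> k = k' \<and> l = l' \<and> r = r' \<and> s = s'"
  by (auto simp: jtile_def)

lemma rot_sigma_jtile: "rot_sigma n (jtile n k l r s) = jtile n (1 - s) (1 - r) (1 - l) (1 - k)"
  by (simp add: jtile_def rot_sigma_def sigma_def)

lemma rot_sigma_J: "t \<in> J n \<Longrightarrow> rot_sigma n t \<in> J n"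
proof -
  let ?P = "{(0,0),(0,1),(1,1)} :: (int \<times> int) set"
  assume "t \<in> J n"
  then obtain k l r s where t: "t = jtile n k l r s"
    and kl: "(k, l) \<in> ?P" and rs: "(r, s) \<in> ?P"
    and excluded: "t \<noteq> jtile n 0 0 1 1" "t \<noteq> jtile n 1 1 0 0"
    unfolding J_def by blast
  have "(1 - s, 1 - r) \<in> ?P" "(1 - l, 1 - k) \<in> ?P" using kl rs by auto
  moreover have "jtile n (1 - s) (1 - r) (1 - l) (1 - k) \<notin> {jtile n 0 0 1 1, jtile n 1 1 0 0}"
    using excluded by (auto simp: t jtile_eq_iff)
  ultimately show ?thesis
    unfolding t rot_sigma_jtile J_def by blast
qed

lemma rot_sigma_T: "t \<in> T n \<Longrightarrow> rot_sigma n t \<in> T n"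
  unfolding T_def
  by (auto simp: rot_sigma_hat dest: rot_sigma_W rot_sigma_B rot_sigma_Y rot_sigma_G rot_sigma_J)

theorem lemma4p1:
  fixes n :: nat
  assumes "1 \<le> n"
  shows "T n = rot_sigma n ` T n"
proof -
  have "rot_sigma n ` T n \<subseteq> T n" using rot_sigma_T by blast
  then show ?thesis by (simp add: involution_image_eq rot_sigma_rot_sigma)
qed

end
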